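(* Let $m\in\mathcal{S}(\Lambda)$ and $v\in V$. Then $T_vm$ is the unique element of $\mathcal{S}_v(\Lambda)$ with the following property: there exist an open neighborhood $B$ of $v$ in $V$ and an integer $N>0$ such that $T_vm(k,\lambda)=m(k,\lambda)$ for all $(k,\lambda)\in\mathbb{Z}\oplus\Lambda$ with $k>N$ and $\lambda/k\in B$. In particular $T_vm$ does not depend on the decomposition of $m$ used to define it.
   Context: $V$ finite-dimensional real vector space, $\Lambda\subset V$ full-rank lattice, $\Lambda_{\mathbb{Q}}=\Lambda\otimes\mathbb{Q}$. Rational polyhedron: finite intersection of half-spaces $\{v:\langle a,v\rangle\ge c\}$, $a\in\mathrm{Hom}(\Lambda,\mathbb{Z})\otimes\mathbb{Q}$, $c\in\mathbb{Q}$. $C_{P,\sigma}=\{(t,tv+\sigma):t>0,v\in P\}$, $[C_{P,\sigma}]$ its indicator on $\mathbb{Z}\oplus\Lambda$ (zero if $P=\emptyset$). Quasi-polynomials: algebra generated by polynomials and periodic functions. $\mathcal{S}(\Lambda)$: functions of the form $\sum_{P\in\mathcal{P}}\sum_{\sigma\in\Sigma_P}q_{P,\sigma}[C_{P,\sigma}]$ (a decomposition) with $\mathcal{P}$ rational polyhedra, $\Sigma_P\subset\Lambda_{\mathbb{Q}}$, $q_{P,\sigma}$ quasi-polynomial on $\mathbb{Z}\oplus\Lambda$, and $\{P+[0,1]\sigma\}$ locally finite. A cone is a rational polyhedron $w+K$ ($K$ a closed convex polyhedral cone) with apex set $w+(K\cap-K)$. $\mathcal{S}_v(\Lambda)$ is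 the subspace of $\mathcal{S}(\Lambda)$ of functions admitting a finite decomposition $\sum_{P,\sigma}q_{P,\sigma}[C_{P,\sigma}]$ in which each $P$ is a cone whose apex set contains $v$. For a polyhedron $P$, $T_vP$ is the tangent cone of $P$ at $v$ (the closure of $v+\mathbb{R}_{\ge0}(P-v)$) if $v\in P$, and $T_vP=\emptyset$ if $v\notin P$. Given a decomposition of $m$, $T_vm=\sum_{P,\sigma}q_{P,\sigma}[C_{T_vP,\sigma}]$ (a finite sum, since only finitely many $P$ contain $v$). *)

theory Defs
  imports "HOL-Analysis.Analysis"
begin

text \<open>V is modelled by a Euclidean space type 'v; linear functionals on V are
  represented via the inner product. Functions on Z (+) Lambda are functions
  int => 'v => complex, of which only the values on int x L matter.\<close>

definition full_rank_lattice :: "'v::euclidean_space set \<Rightarrow> bool" where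
  "full_rank_lattice L \<longleftrightarrow>
     (\<exists>B. independent B \<and> span B = UNIV \<and>
          L = {y. \<exists>c::'v \<Rightarrow> int. y = (\<Sum>b\<in>B. real_of_int (c b) *\<^sub>R b)})"

definition rat_lattice :: "'v::euclidean_space set \<Rightarrow> 'v set" where
  "rat_lattice L = {x. \<exists>n::nat. n > 0 \<and> real n *\<^sub>R x \<in> L}"

text \<open>Elements of Hom(Lambda,Z) tensor Q: functionals rational-valued on Lambda.\<close>
definition rational_functional :: "'v::euclidean_space set \<Rightarrow> 'v \<Rightarrow> bool" where
  "rational_functional L a \<longleftrightarrow> (\<forall>x\<in>L. a \<bullet> x \<in> \<rat>)"

definition rational_polyhedron :: "'v::euclidean_space set \<Rightarrow> 'v set \<Rightarrow> bool" where
  "rational_polyhedron L P \<longleftrightarrow>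
     (\<exists>H. finite H \<and> (\<forall>(a,c)\<in>H. rational_functional L a \<and> c \<in> \<rat>) \<and>
          P = {x. \<forall>(a,c)\<in>H. a \<bullet> x \<ge> c})"

inductive_set qpoly_gen :: "'v::euclidean_space set \<Rightarrow> (int \<Rightarrow> 'v \<Rightarrow> complex) set"
  for L :: "'v set" where
  const: "(\<lambda>k x. c) \<in> qpoly_gen L"
| coord_int: "(\<lambda>k x. of_int k) \<in> qpoly_gen L"
| coord_lin: "(\<lambda>k x. complex_of_real (a \<bullet> x)) \<in> qpoly_gen L"
| periodic: "(N::int) > 0 \<Longrightarrow>
     (\<forall>k j x y. x \<in> L \<longrightarrow> y \<in> L \<longrightarrow>
        f (k + N * j) (x + real_of_int N *\<^sub>R y) = f k x) \<Longrightarrow> f \<in> qpoly_gen L"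
| add: "f \<in> qpoly_gen L \<Longrightarrow> g \<in> qpoly_gen L \<Longrightarrow> (\<lambda>k x. f k x + g k x) \<in> qpoly_gen L"
| mult: "f \<in> qpoly_gen L \<Longrightarrow> g \<in> qpoly_gen L \<Longrightarrow> (\<lambda>k x. f k x * g k x) \<in> qpoly_gen L"

definition quasi_poly :: "'v::euclidean_space set \<Rightarrow> (int \<Rightarrow> 'v \<Rightarrow> complex) \<Rightarrow> bool" where
  "quasi_poly L q \<longleftrightarrow> (\<exists>g\<in>qpoly_gen L. \<forall>k. \<forall>x\<in>L. q k x = g k x)"

definition Ccone :: "'v::euclidean_space set \<Rightarrow> 'v \<Rightarrow> (real \<times> 'v) set" where
  "Ccone P \<sigma> = {(t, t *\<^sub>R y + \<sigma>) | t y. t > 0 \<and> y \<in> P}"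

definition Cind :: "'v::euclidean_space set \<Rightarrow> 'v \<Rightarrow> int \<Rightarrow> 'v \<Rightarrow> complex" where
  "Cind P \<sigma> k x = (if (real_of_int k, x) \<in> Ccone P \<sigma> then 1 else 0)"

definition seg_sum :: "'v::euclidean_space set \<Rightarrow> 'v \<Rightarrow> 'v set" where
  "seg_sum P \<sigma> = {y + s *\<^sub>R \<sigma> | y s. y \<in> P \<and> 0 \<le> s \<and> s \<le> 1}"

definition locally_finite_fam :: "('v::euclidean_space set \<times> 'v) set \<Rightarrow> bool" where
  "locally_finite_fam D \<longleftrightarrow>
     (\<forall>z. \<exists>U. open U \<and> z \<in> U \<and> finite {d\<in>D. seg_sum (fst d) (snd d) \<inter> U \<noteq> {}})"

definition is_decomp ::
  "'v::euclidean_space set \<Rightarrow> ('v set \<times> 'v) set \<Rightarrow> ('v set \<times> 'v \<Rightarrow> int \<Rightarrow> 'v \<Rightarrow> complex)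
     \<Rightarrow> (int \<Rightarrow> 'v \<Rightarrow> complex) \<Rightarrow> bool" where
  "is_decomp L D q m \<longleftrightarrow>
     (\<forall>d\<in>D. rational_polyhedron L (fst d) \<and> snd d \<in> rat_lattice L \<and> quasi_poly L (q d)) \<and>
     locally_finite_fam D \<and>
     (\<forall>k. \<forall>x\<in>L. m k x =
        (\<Sum>d\<in>{d\<in>D. Cind (fst d) (snd d) k x \<noteq> 0}. q d k x * Cind (fst d) (snd d) k x))"

definition in_S :: "'v::euclidean_space set \<Rightarrow> (int \<Rightarrow> 'v \<Rightarrow> complex) \<Rightarrow> bool" where
  "in_S L m \<longleftrightarrow> (\<exists>D q. is_decomp L D q m)"

definition cone_with_apex :: "'v::euclidean_space set \<Rightarrow> 'v set \<Rightarrow> 'v \<Rightarrow> bool" where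
  "cone_with_apex L P v \<longleftrightarrow> rational_polyhedron L P \<and>
     (\<exists>w K. cone K \<and> closed K \<and> convex K \<and> polyhedron K \<and>
        P = (\<lambda>x. w + x) ` K \<and> v \<in> (\<lambda>x. w + x) ` (K \<inter> uminus ` K))"

definition in_Sv :: "'v::euclidean_space set \<Rightarrow> 'v \<Rightarrow> (int \<Rightarrow> 'v \<Rightarrow> complex) \<Rightarrow> bool" where
  "in_Sv L v m \<longleftrightarrow>
     (\<exists>D q. finite D \<and> is_decomp L D q m \<and> (\<forall>d\<in>D. cone_with_apex L (fst d) v))"

definition tangent_cone :: "'v::real_normed_vector set \<Rightarrow> 'v \<Rightarrow> 'v set" where
  "tangent_cone P v =
     (if v \<in> P then closure ((\<lambda>x. v + x) ` {t *\<^sub>R (y - v) | t y. t \<ge> 0 \<and> y \<in> P}) else {})"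

definition Tv :: "('v::euclidean_space set \<times> 'v) set \<Rightarrow> ('v set \<times> 'v \<Rightarrow> int \<Rightarrow> 'v \<Rightarrow> complex)
     \<Rightarrow> 'v \<Rightarrow> int \<Rightarrow> 'v \<Rightarrow> complex" where
  "Tv D q v k x = (\<Sum>d\<in>{d\<in>D. v \<in> fst d}. q d k x * Cind (tangent_cone (fst d) v) (snd d) k x)"

definition agrees_near :: "'v::euclidean_space set \<Rightarrow> 'v \<Rightarrow> (int \<Rightarrow> 'v \<Rightarrow> complex)
     \<Rightarrow> (int \<Rightarrow> 'v \<Rightarrow> complex) \<Rightarrow> bool" where
  "agrees_near L v m m' \<longleftrightarrow>
     (\<exists>B N. open B \<and> v \<in> B \<and> (N::int) > 0 \<and>
        (\<forall>k. \<forall>x\<in>L. k > N \<and> (1 / real_of_int k) *\<^sub>R x \<in> B \<longrightarrow> m' k x = m k x))"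

end

theory Submission
  imports Defs
begin

(*
  Near v a rational polyhedron coincides with its tangent cone at v, and only finitely many pieces
  of a locally finite decomposition come close to the ray through v.  Hence T_v m agrees with m on
  the lattice points (k, lambda) with k large and lambda/k close to v.

  For uniqueness it suffices to show that an element f of S_v(Lambda) vanishing on all such points
  vanishes identically.  Choose a rational point u close to v that lies on all the hyperplanes
  through v bounding the cones of a decomposition of f.  Along a ray (k + j M, lambda + j M u) the
  cone indicators are then constant while the quasi-polynomial coefficients become polynomials
  in j, so f restricted to the ray is a polynomial in j.  Since (lambda + j M u)/(k + j M) tends
  to u, this polynomial vanishes for large j, hence identically, in particular at j = 0.
*)

section \<open>Lattices and rational points\<close>

lemma full_rank_lattice_add:
  assumes "full_rank_lattice L" "x \<in> L" "y \<in> L"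
  shows "x + y \<in> L"
proof -
  obtain B where B: "L = {y. \<exists>c::_ \<Rightarrow> int. y = (\<Sum>b\<in>B. of_int (c b) *\<^sub>R b)}"
    using assms(1) unfolding full_rank_lattice_def by blast
  then obtain c c' :: "_ \<Rightarrow> int" where
    "x = (\<Sum>b\<in>B. of_int (c b) *\<^sub>R b)" "y = (\<Sum>b\<in>B. of_int (c' b) *\<^sub>R b)"
    using assms(2,3) by blast
  then have "x + y = (\<Sum>b\<in>B. of_int (c b + c' b) *\<^sub>R b)"
    by (simp add: sum.distrib scaleR_add_left)
  then show ?thesis
    unfolding B by (intro CollectI exI[of _ "\<lambda>b. c b + c' b"])
qed

lemma full_rank_lattice_scaleR_int:
  assumes "full_rank_lattice L" "x \<in> L"
  shows "of_int n *\<^sub>R x \<in> L"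
proof -
  obtain B where B: "L = {y. \<exists>c::_ \<Rightarrow> int. y = (\<Sum>b\<in>B. of_int (c b) *\<^sub>R b)}"
    using assms(1) unfolding full_rank_lattice_def by blast
  then obtain c :: "_ \<Rightarrow> int" where "x = (\<Sum>b\<in>B. of_int (c b) *\<^sub>R b)"
    using assms(2) by blast
  then have "of_int n *\<^sub>R x = (\<Sum>b\<in>B. of_int (n * c b) *\<^sub>R b)"
    by (simp add: scaleR_sum_right)
  then show ?thesis
    unfolding B by (intro CollectI exI[of _ "\<lambda>b. n * c b"])
qed

lemma full_rank_lattice_scaleR_nat:
  assumes "full_rank_lattice L" "x \<in> L"
  shows "of_nat n *\<^sub>R x \<in> L"
  using full_rank_lattice_scaleR_int[OF assms, of "int n"] by simp

lemma rat_lattice_add: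
  assumes "full_rank_lattice L" "x \<in> rat_lattice L" "y \<in> rat_lattice L"
  shows "x + y \<in> rat_lattice L"
proof -
  obtain n n' :: nat where n: "n > 0" "n' > 0" "real n *\<^sub>R x \<in> L" "real n' *\<^sub>R y \<in> L"
    using assms(2,3) unfolding rat_lattice_def by blast
  have "real (n * n') *\<^sub>R (x + y) = real n' *\<^sub>R (real n *\<^sub>R x) + real n *\<^sub>R (real n' *\<^sub>R y)"
    by (simp add: algebra_simps)
  also have "\<dots> \<in> L"
    by (intro full_rank_lattice_add full_rank_lattice_scaleR_nat assms(1) n(3,4))
  finally show ?thesis
    unfolding rat_lattice_def using n by (intro CollectI exI[of _ "n * n'"]) auto
qed

lemma rat_lattice_scaleR:
  assumes "full_rank_lattice L" "x \<in> rat_lattice L" "t \<in> \<rat>"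
  shows "t *\<^sub>R x \<in> rat_lattice L"
proof -
  obtain n :: nat where n: "n > 0" "real n *\<^sub>R x \<in> L"
    using assms(2) unfolding rat_lattice_def by blast
  obtain a b :: int where ab: "b > 0" "t = of_int a / of_int b"
    using Rats_cases'[OF assms(3)] by blast
  have "real (n * nat b) *\<^sub>R (t *\<^sub>R x) = of_int a *\<^sub>R (real n *\<^sub>R x)"
    using ab by (simp add: field_simps)
  also have "\<dots> \<in> L"
    by (rule full_rank_lattice_scaleR_int[OF assms(1) n(2)])
  finally show ?thesis
    unfolding rat_lattice_def using n ab by (intro CollectI exI[of _ "n * nat b"]) auto
qed

lemma rat_lattice_diff:
  assumes "full_rank_lattice L" "x \<in> rat_lattice L" "y \<in> rat_lattice L"
  shows "x - y \<in> rat_lattice L"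
  using rat_lattice_add[OF assms(1,2) rat_lattice_scaleR[OF assms(1,3), of "-1"]] by simp

lemma rational_functional_rat_lattice:
  assumes "rational_functional L a" "x \<in> rat_lattice L"
  shows "a \<bullet> x \<in> \<rat>"
proof -
  obtain n :: nat where n: "n > 0" "real n *\<^sub>R x \<in> L"
    using assms(2) unfolding rat_lattice_def by blast
  then have "(a \<bullet> (real n *\<^sub>R x)) / real n \<in> \<rat>"
    using assms(1) unfolding rational_functional_def by (intro Rats_divide) auto
  then show ?thesis
    using n by simp
qed

lemma rat_lattice_dense:
  assumes "full_rank_lattice L" "e > 0"
  shows "\<exists>u\<in>rat_lattice L. dist u v < e"
proof -
  obtain B where B: "span B = UNIV" "finite B"
    and L: "L = {y. \<exists>c::_ \<Rightarrow> int. y = (\<Sum>b\<in>B. of_int (c b) *\<^sub>R b)}"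
    using assms(1) unfolding full_rank_lattice_def by (blast dest: finiteI_independent)
  have "v \<in> range (\<lambda>r. \<Sum>b\<in>B. r b *\<^sub>R b)"
    using span_finite[OF B(2)] B(1) by simp
  then obtain r where r: "v = (\<Sum>b\<in>B. r b *\<^sub>R b)"
    by blast
  obtain n :: nat where n: "real n > (\<Sum>b\<in>B. norm b) / e"
    using reals_Archimedean2 by blast
  moreover have "(\<Sum>b\<in>B. norm b) / e \<ge> 0"
    using assms(2) by (simp add: sum_nonneg)
  ultimately have "n > 0"
    by (metis of_nat_0_less_iff order.strict_trans1)
  define u where "u = (\<Sum>b\<in>B. (of_int \<lfloor>n * r b\<rfloor> / real n) *\<^sub>R b)"
  have "real n *\<^sub>R u = (\<Sum>b\<in>B. of_int \<lfloor>n * r b\<rfloor> *\<^sub>R b)"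
    unfolding u_def scaleR_sum_right using \<open>n > 0\<close> by simp
  then have "u \<in> rat_lattice L"
    unfolding rat_lattice_def L using \<open>n > 0\<close>
    by (auto intro!: exI[of _ n] exI[of _ "\<lambda>b. \<lfloor>n * r b\<rfloor>"])
  have "norm (v - u) = norm (\<Sum>b\<in>B. ((n * r b - \<lfloor>n * r b\<rfloor>) / n) *\<^sub>R b)"
    unfolding r u_def using \<open>n > 0\<close>
    by (simp add: sum_subtractf diff_divide_distrib scaleR_diff_left)
  also have "\<dots> \<le> (\<Sum>b\<in>B. norm b / n)"
  proof (intro sum_norm_le)
    fix b
    have "\<bar>n * r b - \<lfloor>n * r b\<rfloor>\<bar> \<le> 1"
      by linarith
    then show "norm (((n * r b - \<lfloor>n * r b\<rfloor>) / n) *\<^sub>R b) \<le> norm b / n"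
      using \<open>n > 0\<close> by (simp add: divide_right_mono mult_left_le_one_le)
  qed
  also have "\<dots> < e"
    using n assms(2) \<open>n > 0\<close> by (simp add: pos_divide_less_eq mult.commute flip: sum_divide_distrib)
  finally show ?thesis
    using \<open>u \<in> rat_lattice L\<close> by (auto simp: dist_norm norm_minus_commute)
qed

section \<open>Rational points on rational affine subspaces\<close>

definition rational_constraints :: "'v::euclidean_space set \<Rightarrow> ('v \<times> real) set \<Rightarrow> bool" where
  "rational_constraints L H \<longleftrightarrow> (\<forall>(a,c)\<in>H. rational_functional L a \<and> c \<in> \<rat>)"

definition tight_at :: "('v::real_inner \<times> real) set \<Rightarrow> 'v \<Rightarrow> bool" where
  "tight_at H v \<longleftrightarrow> (\<forall>a c. (a, c) \<in> H \<longrightarrow> a \<bullet> v = c)"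

lemma tight_at_insert [simp]: "tight_at (insert (a, c) H) v \<longleftrightarrow> a \<bullet> v = c \<and> tight_at H v"
  by (auto simp: tight_at_def)

lemma rational_constraints_insert [simp]:
  "rational_constraints L (insert (a, c) H) \<longleftrightarrow>
     rational_functional L a \<and> c \<in> \<rat> \<and> rational_constraints L H"
  by (simp add: rational_constraints_def)

text \<open>Approximate \<open>v\<close> by a rational solution \<open>p\<close> of \<open>H\<close>, then move \<open>p\<close> along \<open>d\<close> onto the
  hyperplane \<open>a \<bullet> x = c\<close>.\<close>
lemma rat_lattice_dense_insert_transversal:
  assumes L: "full_rank_lattice L"
    and dense: "\<And>v e. tight_at H v \<Longrightarrow> e > 0 \<Longrightarrow> \<exists>u\<in>rat_lattice L. dist u v < e \<and> tight_at H u"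
    and a: "rational_functional L a" and c: "c \<in> \<rat>"
    and v: "a \<bullet> v = c" "tight_at H v" and e: "e > 0"
    and d: "d \<in> rat_lattice L" "a \<bullet> d \<noteq> 0" "\<And>a' c'. (a', c') \<in> H \<Longrightarrow> a' \<bullet> d = 0"
  shows "\<exists>u\<in>rat_lattice L. dist u v < e \<and> tight_at (insert (a, c) H) u"
proof -
  define \<kappa> where "\<kappa> = 1 + norm a * norm d / \<bar>a \<bullet> d\<bar>"
  have "\<kappa> \<ge> 1"
    by (simp add: \<kappa>_def)
  then obtain p where p: "p \<in> rat_lattice L" "dist p v < e / \<kappa>" "tight_at H p"
    using dense[OF v(2), of "e / \<kappa>"] e by auto
  define t where "t = (c - a \<bullet> p) / (a \<bullet> d)"
  define u where "u = p + t *\<^sub>R d"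
  have "t \<in> \<rat>"
    unfolding t_def using a c p(1) d(1) by (intro Rats_divide Rats_diff rational_functional_rat_lattice)
  then have "u \<in> rat_lattice L"
    unfolding u_def using L p(1) d(1) by (intro rat_lattice_add rat_lattice_scaleR)
  have "tight_at H u"
    using p(3) d(3) by (auto simp: tight_at_def u_def inner_add_right)
  moreover have "a \<bullet> u = c"
    using d(2) by (simp add: u_def t_def inner_add_right)
  ultimately have "tight_at (insert (a, c) H) u"
    by simp
  have "\<bar>t\<bar> = \<bar>a \<bullet> (v - p)\<bar> / \<bar>a \<bullet> d\<bar>"
    using v(1) by (simp add: t_def inner_diff_right abs_divide)
  also have "\<dots> \<le> norm a * dist p v / \<bar>a \<bullet> d\<bar>"
    using Cauchy_Schwarz_ineq2[of a "v - p"]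
    by (simp add: divide_right_mono dist_norm norm_minus_commute)
  finally have "\<bar>t\<bar> * norm d \<le> norm a * dist p v / \<bar>a \<bullet> d\<bar> * norm d"
    by (rule mult_right_mono) simp
  moreover have "dist u v \<le> dist p v + \<bar>t\<bar> * norm d"
    using norm_triangle_ineq[of "p - v" "t *\<^sub>R d"] by (simp add: u_def dist_norm algebra_simps)
  ultimately have "dist u v \<le> dist p v + norm a * dist p v / \<bar>a \<bullet> d\<bar> * norm d"
    by linarith
  also have "\<dots> = dist p v * \<kappa>"
    by (simp add: \<kappa>_def algebra_simps)
  also have "\<dots> < e"
    using p(2) \<open>\<kappa> \<ge> 1\<close> by (simp add: pos_less_divide_eq)
  finally show ?thesis
    using \<open>u \<in> rat_lattice L\<close> \<open>tight_at (insert (a, c) H) u\<close> by blast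
qed

lemma rat_lattice_dense_in_solutions_insert:
  assumes L: "full_rank_lattice L"
    and dense: "\<And>v e. tight_at H v \<Longrightarrow> e > 0 \<Longrightarrow> \<exists>u\<in>rat_lattice L. dist u v < e \<and> tight_at H u"
    and a: "rational_functional L a" and c: "c \<in> \<rat>"
    and v: "tight_at (insert (a, c) H) v" and e: "e > 0"
  shows "\<exists>u\<in>rat_lattice L. dist u v < e \<and> tight_at (insert (a, c) H) u"
proof -
  define W where "W = {p \<in> rat_lattice L. tight_at H p}"
  have "a \<bullet> v = c" "tight_at H v"
    using v by auto
  show ?thesis
  proof (cases "\<exists>p1\<in>W. \<exists>p2\<in>W. a \<bullet> p1 \<noteq> a \<bullet> p2")
    case True
    then obtain p1 p2 where p12: "p1 \<in> W" "p2 \<in> W" "a \<bullet> p1 \<noteq> a \<bullet> p2"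
      by blast
    have "p2 - p1 \<in> rat_lattice L" "a \<bullet> (p2 - p1) \<noteq> 0"
      using p12 rat_lattice_diff[OF L] by (auto simp: W_def inner_diff_right)
    moreover have "a' \<bullet> (p2 - p1) = 0" if "(a', c') \<in> H" for a' c'
      using p12(1,2) that by (auto simp: W_def tight_at_def inner_diff_right)
    ultimately show ?thesis
      using rat_lattice_dense_insert_transversal[OF L dense a c \<open>a \<bullet> v = c\<close> \<open>tight_at H v\<close> e] by blast
  next
    case False
    obtain p where p: "p \<in> W" "dist p v < e"
      using dense[OF \<open>tight_at H v\<close> e] by (auto simp: W_def)
    have "W \<subseteq> {x. a \<bullet> x = a \<bullet> p}"
      using False p(1) by blast
    then have "closure W \<subseteq> {x. a \<bullet> x = a \<bullet> p}"
      by (rule closure_minimal) (rule closed_hyperplane)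
    moreover have "v \<in> closure W"
      using dense[OF \<open>tight_at H v\<close>] by (auto simp: closure_approachable W_def)
    ultimately have "v \<in> {x. a \<bullet> x = a \<bullet> p}"
      by (rule subsetD)
    then have "a \<bullet> p = c"
      using \<open>a \<bullet> v = c\<close> by simp
    then show ?thesis
      using p by (auto simp: W_def)
  qed
qed

lemma rat_lattice_dense_in_solutions:
  assumes "full_rank_lattice L" "finite H" "rational_constraints L H" "tight_at H v" "e > 0"
  shows "\<exists>u\<in>rat_lattice L. dist u v < e \<and> tight_at H u"
  using assms(2-5)
proof (induction H arbitrary: v e rule: finite_induct)
  case empty
  then show ?case
    using rat_lattice_dense[OF assms(1)] by (simp add: tight_at_def)
next
  case (insert h H)
  obtain a c where h: "h = (a, c)"
    by fastforce
  have "rational_functional L a" "c \<in> \<rat>" "rational_constraints L H"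
    using insert.prems(1) by (simp_all add: h)
  then show ?case
    using rat_lattice_dense_in_solutions_insert[OF assms(1) insert.IH] insert.prems(2,3)
    unfolding h by blast
qed

section \<open>Quasi-polynomials along rays\<close>

lemma quasi_poly_const: "quasi_poly L (\<lambda>k x. c)"
  unfolding quasi_poly_def by (intro bexI[of _ "\<lambda>k x. c"] qpoly_gen.const) auto

lemma quasi_poly_add:
  assumes "quasi_poly L f" "quasi_poly L g"
  shows "quasi_poly L (\<lambda>k x. f k x + g k x)"
proof -
  obtain f' g' where "f' \<in> qpoly_gen L" "g' \<in> qpoly_gen L"
    "\<forall>k. \<forall>x\<in>L. f k x = f' k x" "\<forall>k. \<forall>x\<in>L. g k x = g' k x"
    using assms unfolding quasi_poly_def by blast
  then show ?thesis
    unfolding quasi_poly_def by (intro bexI[of _ "\<lambda>k x. f' k x + g' k x"] qpoly_gen.add) auto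
qed

lemma quasi_poly_diff:
  assumes "quasi_poly L f" "quasi_poly L g"
  shows "quasi_poly L (\<lambda>k x. f k x - g k x)"
proof -
  obtain f' g' where "f' \<in> qpoly_gen L" "g' \<in> qpoly_gen L"
    "\<forall>k. \<forall>x\<in>L. f k x = f' k x" "\<forall>k. \<forall>x\<in>L. g k x = g' k x"
    using assms unfolding quasi_poly_def by blast
  then show ?thesis
    unfolding quasi_poly_def
    by (intro bexI[of _ "\<lambda>k x. f' k x + (\<lambda>k x. - 1) k x * g' k x"]
        qpoly_gen.add qpoly_gen.mult qpoly_gen.const) auto
qed

lemma quasi_poly_sum:
  assumes "\<And>i. i \<in> I \<Longrightarrow> quasi_poly L (f i)"
  shows "quasi_poly L (\<lambda>k x. \<Sum>i\<in>I. f i k x)"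
  using assms
proof (induction I rule: infinite_finite_induct)
  case (insert i I)
  then show ?case
    using quasi_poly_add[of L "f i" "\<lambda>k x. \<Sum>i\<in>I. f i k x"] by simp
qed (simp_all add: quasi_poly_const)

definition polynomial_along_rays :: "'v::real_vector set \<Rightarrow> int \<Rightarrow> (int \<Rightarrow> 'v \<Rightarrow> complex) \<Rightarrow> bool" where
  "polynomial_along_rays L N f \<longleftrightarrow> (\<forall>m k y x. y \<in> L \<longrightarrow> x \<in> L \<longrightarrow>
     (\<exists>p. \<forall>j::nat. f (k + int j * N * m) (x + (of_nat j * of_int N) *\<^sub>R y) = poly p (of_nat j)))"

lemma polynomial_along_raysD:
  assumes "polynomial_along_rays L N f" "y \<in> L" "x \<in> L"
  obtains p where "\<And>j. f (k + int j * N * m) (x + (of_nat j * of_int N) *\<^sub>R y) = poly p (of_nat j)"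
  using assms unfolding polynomial_along_rays_def by blast

lemma polynomial_along_rays_multiple:
  assumes L: "full_rank_lattice L" and f: "polynomial_along_rays L N f"
  shows "polynomial_along_rays L (N * M) f"
  unfolding polynomial_along_rays_def
proof (intro allI impI)
  fix m k y x
  assume "y \<in> L" "x \<in> L"
  then obtain p where p: "\<And>j. f (k + int j * N * (M * m)) (x + (of_nat j * of_int N) *\<^sub>R (of_int M *\<^sub>R y))
      = poly p (of_nat j)"
    using polynomial_along_raysD[OF f full_rank_lattice_scaleR_int[OF L]] by blast
  show "\<exists>p. \<forall>j::nat. f (k + int j * (N * M) * m) (x + (of_nat j * of_int (N * M)) *\<^sub>R y) = poly p (of_nat j)"
    using p by (intro exI[of _ p]) (simp add: ac_simps)
qed

lemma polynomial_along_rays_add: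
  assumes "polynomial_along_rays L N f" "polynomial_along_rays L N g"
  shows "polynomial_along_rays L N (\<lambda>k x. f k x + g k x)"
  unfolding polynomial_along_rays_def
proof (intro allI impI)
  fix m k y x
  assume "y \<in> L" "x \<in> L"
  with assms obtain p p' where
    "\<And>j. f (k + int j * N * m) (x + (of_nat j * of_int N) *\<^sub>R y) = poly p (of_nat j)"
    "\<And>j. g (k + int j * N * m) (x + (of_nat j * of_int N) *\<^sub>R y) = poly p' (of_nat j)"
    by (metis polynomial_along_raysD)
  then show "\<exists>q. \<forall>j::nat. f (k + int j * N * m) (x + (of_nat j * of_int N) *\<^sub>R y) +
      g (k + int j * N * m) (x + (of_nat j * of_int N) *\<^sub>R y) = poly q (of_nat j)"
    by (intro exI[of _ "p + p'"]) simp
qed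

lemma polynomial_along_rays_mult:
  assumes "polynomial_along_rays L N f" "polynomial_along_rays L N g"
  shows "polynomial_along_rays L N (\<lambda>k x. f k x * g k x)"
  unfolding polynomial_along_rays_def
proof (intro allI impI)
  fix m k y x
  assume "y \<in> L" "x \<in> L"
  with assms obtain p p' where
    "\<And>j. f (k + int j * N * m) (x + (of_nat j * of_int N) *\<^sub>R y) = poly p (of_nat j)"
    "\<And>j. g (k + int j * N * m) (x + (of_nat j * of_int N) *\<^sub>R y) = poly p' (of_nat j)"
    by (metis polynomial_along_raysD)
  then show "\<exists>q. \<forall>j::nat. f (k + int j * N * m) (x + (of_nat j * of_int N) *\<^sub>R y) *
      g (k + int j * N * m) (x + (of_nat j * of_int N) *\<^sub>R y) = poly q (of_nat j)"
    by (intro exI[of _ "p * p'"]) simp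
qed

lemma polynomial_along_rays_const: "polynomial_along_rays L 1 (\<lambda>k x. c)"
  unfolding polynomial_along_rays_def by (auto intro!: exI[of _ "[:c:]"])

lemma polynomial_along_rays_of_int: "polynomial_along_rays L 1 (\<lambda>k x. of_int k)"
  unfolding polynomial_along_rays_def
proof (intro allI impI)
  fix m k :: int and y x
  show "\<exists>p. \<forall>j::nat. of_int (k + int j * 1 * m) = poly p (of_nat j)"
    by (intro exI[of _ "[:of_int k, of_int m:]"]) (simp add: algebra_simps)
qed

lemma polynomial_along_rays_inner: "polynomial_along_rays L 1 (\<lambda>k x. complex_of_real (a \<bullet> x))"
  unfolding polynomial_along_rays_def
proof (intro allI impI)
  fix m k :: int and y x
  show "\<exists>p. \<forall>j::nat. complex_of_real (a \<bullet> (x + (of_nat j * of_int 1) *\<^sub>R y)) = poly p (of_nat j)"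
    by (intro exI[of _ "[:of_real (a \<bullet> x), of_real (a \<bullet> y):]"]) (simp add: algebra_simps inner_add_right)
qed

lemma polynomial_along_rays_periodic:
  assumes L: "full_rank_lattice L"
    and f: "\<forall>k j x y. x \<in> L \<longrightarrow> y \<in> L \<longrightarrow> f (k + N * j) (x + of_int N *\<^sub>R y) = f k x"
  shows "polynomial_along_rays L N f"
  unfolding polynomial_along_rays_def
proof (intro allI impI)
  fix m k y x
  assume "y \<in> L" "x \<in> L"
  then have "f (k + N * (int j * m)) (x + of_int N *\<^sub>R (of_nat j *\<^sub>R y)) = f k x" for j
    using f full_rank_lattice_scaleR_nat[OF L] by blast
  then show "\<exists>p. \<forall>j::nat. f (k + int j * N * m) (x + (of_nat j * of_int N) *\<^sub>R y) = poly p (of_nat j)"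
    by (intro exI[of _ "[:f k x:]"]) (simp add: ac_simps)
qed

lemma qpoly_gen_polynomial_along_rays:
  assumes L: "full_rank_lattice L" and "g \<in> qpoly_gen L"
  shows "\<exists>N>0. polynomial_along_rays L N g"
  using assms(2)
proof induction
  case (const c)
  show ?case
    using polynomial_along_rays_const by (intro exI[of _ 1]) simp
next
  case coord_int
  show ?case
    using polynomial_along_rays_of_int by (intro exI[of _ 1]) simp
next
  case (coord_lin a)
  show ?case
    using polynomial_along_rays_inner by (intro exI[of _ 1]) simp
next
  case (periodic N f)
  then show ?case
    using polynomial_along_rays_periodic[OF L] by blast
next
  case (add f g)
  then obtain N N' where "N > 0" "N' > 0" "polynomial_along_rays L N f" "polynomial_along_rays L N' g"
    by blast
  then show ?case
    using polynomial_along_rays_multiple[OF L, of N f N'] polynomial_along_rays_multiple[OF L, of N' g N]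
    by (intro exI[of _ "N * N'"]) (simp add: mult.commute polynomial_along_rays_add)
next
  case (mult f g)
  then obtain N N' where "N > 0" "N' > 0" "polynomial_along_rays L N f" "polynomial_along_rays L N' g"
    by blast
  then show ?case
    using polynomial_along_rays_multiple[OF L, of N f N'] polynomial_along_rays_multiple[OF L, of N' g N]
    by (intro exI[of _ "N * N'"]) (simp add: mult.commute polynomial_along_rays_mult)
qed

lemma quasi_poly_polynomial_along_rays:
  assumes L: "full_rank_lattice L" and "quasi_poly L q"
  shows "\<exists>N>0. polynomial_along_rays L N q"
proof -
  obtain g where g: "g \<in> qpoly_gen L" "\<forall>k. \<forall>x\<in>L. q k x = g k x"
    using assms(2) unfolding quasi_poly_def by blast
  obtain N where "N > 0" and N: "polynomial_along_rays L N g"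
    using qpoly_gen_polynomial_along_rays[OF L g(1)] by blast
  have "x + (of_nat j * of_int N) *\<^sub>R y \<in> L" if "x \<in> L" "y \<in> L" for x y and j :: nat
    using full_rank_lattice_add[OF L that(1) full_rank_lattice_scaleR_int[OF L that(2), of "int j * N"]]
    by simp
  then have "polynomial_along_rays L N q"
    using N g(2) unfolding polynomial_along_rays_def by simp
  then show ?thesis
    using \<open>N > 0\<close> by blast
qed

lemma quasi_polys_polynomial_along_rays:
  assumes L: "full_rank_lattice L" and "finite I" "\<And>i. i \<in> I \<Longrightarrow> quasi_poly L (q i)"
  shows "\<exists>N>0. \<forall>i\<in>I. polynomial_along_rays L N (q i)"
  using assms(2,3)
proof (induction I rule: finite_induct)
  case empty
  show ?case
    by (auto intro: exI[of _ 1])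
next
  case (insert i I)
  then obtain N N' where "N > 0" "N' > 0" "polynomial_along_rays L N (q i)"
    "\<forall>i\<in>I. polynomial_along_rays L N' (q i)"
    using quasi_poly_polynomial_along_rays[OF L] by (metis insertCI)
  then show ?case
    using polynomial_along_rays_multiple[OF L, of N _ N'] polynomial_along_rays_multiple[OF L, of N' _ N]
    by (intro exI[of _ "N * N'"]) (simp add: mult.commute)
qed

section \<open>Polyhedra, tangent cones and cones with apex\<close>

definition polyhedron_of :: "('v::real_inner \<times> real) set \<Rightarrow> 'v set" where
  "polyhedron_of H = {x. \<forall>a c. (a, c) \<in> H \<longrightarrow> c \<le> a \<bullet> x}"

definition active_constraints :: "('v::real_inner \<times> real) set \<Rightarrow> 'v \<Rightarrow> ('v \<times> real) set" where
  "active_constraints H v = {(a,c)\<in>H. a \<bullet> v = c}"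

lemma rational_polyhedron_iff:
  "rational_polyhedron L P \<longleftrightarrow> (\<exists>H. finite H \<and> rational_constraints L H \<and> P = polyhedron_of H)"
proof -
  have "{x. \<forall>(a,c)\<in>H. a \<bullet> x \<ge> c} = polyhedron_of H" for H :: "('a \<times> real) set"
    by (auto simp: polyhedron_of_def)
  then show ?thesis
    by (simp add: rational_polyhedron_def rational_constraints_def)
qed

lemma closed_polyhedron_of: "closed (polyhedron_of H)"
proof -
  have "polyhedron_of H = (\<Inter>(a,c)\<in>H. {x. a \<bullet> x \<ge> c})"
    by (auto simp: polyhedron_of_def)
  then show ?thesis
    by (auto intro: closed_halfspace_ge)
qed

lemma finite_active_constraints: "finite H \<Longrightarrow> finite (active_constraints H v)"
  unfolding active_constraints_def by (rule finite_subset[of _ H]) auto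

lemma rational_constraints_active:
  "rational_constraints L H \<Longrightarrow> rational_constraints L (active_constraints H v)"
  by (auto simp: rational_constraints_def active_constraints_def)

lemma tight_at_active_constraints: "tight_at (active_constraints H v) v"
  by (auto simp: tight_at_def active_constraints_def)

lemma polyhedron_of_subset_active: "polyhedron_of H \<subseteq> polyhedron_of (active_constraints H v)"
  by (auto simp: polyhedron_of_def active_constraints_def)

lemma polyhedron_of_ray:
  assumes "tight_at T v" "x \<in> polyhedron_of T" "t \<ge> 0"
  shows "v + t *\<^sub>R (x - v) \<in> polyhedron_of T"
  unfolding polyhedron_of_def
proof clarify
  fix a c
  assume "(a, c) \<in> T"
  then have "a \<bullet> v = c" "c \<le> a \<bullet> x"
    using assms(1,2) by (auto simp: tight_at_def polyhedron_of_def)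
  then show "c \<le> a \<bullet> (v + t *\<^sub>R (x - v))"
    using assms(3) by (simp add: inner_add_right inner_diff_right)
qed

lemma polyhedron_of_locally_active:
  assumes "finite H" "v \<in> polyhedron_of H"
  obtains U where "open U" "v \<in> U" "U \<inter> polyhedron_of (active_constraints H v) \<subseteq> polyhedron_of H"
proof
  define U where "U = (\<Inter>(a,c)\<in>H - active_constraints H v. {y. c < a \<bullet> y})"
  show "open U"
    unfolding U_def using assms(1) by (intro open_INT) (auto intro: open_halfspace_gt)
  show "v \<in> U"
    using assms(2) by (fastforce simp: U_def polyhedron_of_def active_constraints_def order_le_less)
  show "U \<inter> polyhedron_of (active_constraints H v) \<subseteq> polyhedron_of H"
  proof
    fix y
    assume "y \<in> U \<inter> polyhedron_of (active_constraints H v)"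
    then have y: "y \<in> U" "\<And>a c. (a, c) \<in> H \<Longrightarrow> a \<bullet> v = c \<Longrightarrow> c \<le> a \<bullet> y"
      by (auto simp: polyhedron_of_def active_constraints_def)
    show "y \<in> polyhedron_of H"
      unfolding polyhedron_of_def
    proof (intro CollectI allI impI)
      fix a c
      assume "(a, c) \<in> H"
      show "c \<le> a \<bullet> y"
      proof (cases "a \<bullet> v = c")
        case True
        then show ?thesis
          using y(2) \<open>(a, c) \<in> H\<close> by blast
      next
        case False
        then have "(a, c) \<in> H - active_constraints H v"
          using \<open>(a, c) \<in> H\<close> by (simp add: active_constraints_def)
        from INT_D[OF y(1)[unfolded U_def] this] show ?thesis
          by simp
      qed
    qed
  qed
qed

lemma open_contains_segment_start:
  fixes v :: "'a::real_normed_vector"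
  assumes "open U" "v \<in> U"
  obtains \<epsilon> where "\<epsilon> > 0" "v + \<epsilon> *\<^sub>R (x - v) \<in> U"
proof -
  obtain e where "e > 0" "ball v e \<subseteq> U"
    using assms open_contains_ball by blast
  define \<epsilon> where "\<epsilon> = e / (norm (x - v) + 1)"
  have "\<epsilon> > 0"
    using \<open>e > 0\<close> by (simp add: \<epsilon>_def add_nonneg_pos)
  have "norm (\<epsilon> *\<^sub>R (x - v)) = e * (norm (x - v) / (norm (x - v) + 1))"
    using \<open>e > 0\<close> by (simp add: \<epsilon>_def add_nonneg_pos)
  also have "\<dots> < e * 1"
    using \<open>e > 0\<close> divide_less_eq_1_pos[of "norm (x - v) + 1" "norm (x - v)"]
    by (intro mult_strict_left_mono) (simp_all add: add_nonneg_pos)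
  finally have "v + \<epsilon> *\<^sub>R (x - v) \<in> ball v e"
    by (simp add: dist_norm)
  then show ?thesis
    using that \<open>\<epsilon> > 0\<close> \<open>ball v e \<subseteq> U\<close> by blast
qed

lemma polyhedron_of_active_shrink:
  assumes "finite H" "v \<in> polyhedron_of H" "x \<in> polyhedron_of (active_constraints H v)"
  obtains \<epsilon> where "\<epsilon> > 0" "v + \<epsilon> *\<^sub>R (x - v) \<in> polyhedron_of H"
proof -
  obtain U where U: "open U" "v \<in> U" "U \<inter> polyhedron_of (active_constraints H v) \<subseteq> polyhedron_of H"
    using polyhedron_of_locally_active[OF assms(1,2)] by blast
  obtain \<epsilon> where "\<epsilon> > 0" "v + \<epsilon> *\<^sub>R (x - v) \<in> U"
    using open_contains_segment_start[OF U(1,2)] by blast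
  moreover have "v + \<epsilon> *\<^sub>R (x - v) \<in> polyhedron_of (active_constraints H v)"
    using polyhedron_of_ray[OF tight_at_active_constraints assms(3)] \<open>\<epsilon> > 0\<close> by simp
  ultimately show ?thesis
    using that U(3) by blast
qed

lemma tangent_cone_polyhedron_of:
  assumes "finite H" "v \<in> polyhedron_of H"
  shows "tangent_cone (polyhedron_of H) v = polyhedron_of (active_constraints H v)"
proof -
  define C where "C = (\<lambda>x. v + x) ` {t *\<^sub>R (y - v) | t y. t \<ge> 0 \<and> y \<in> polyhedron_of H}"
  have "C \<subseteq> polyhedron_of (active_constraints H v)"
  proof (clarsimp simp: C_def)
    fix t :: real and y
    assume "t \<ge> 0" "y \<in> polyhedron_of H"
    then show "v + t *\<^sub>R (y - v) \<in> polyhedron_of (active_constraints H v)"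
      using polyhedron_of_ray[OF tight_at_active_constraints] polyhedron_of_subset_active by blast
  qed
  moreover have "polyhedron_of (active_constraints H v) \<subseteq> C"
  proof
    fix x
    assume "x \<in> polyhedron_of (active_constraints H v)"
    then obtain \<epsilon> where "\<epsilon> > 0" "v + \<epsilon> *\<^sub>R (x - v) \<in> polyhedron_of H"
      using polyhedron_of_active_shrink[OF assms] by blast
    moreover have "x - v = (1 / \<epsilon>) *\<^sub>R ((v + \<epsilon> *\<^sub>R (x - v)) - v)" "1 / \<epsilon> \<ge> 0"
      using \<open>\<epsilon> > 0\<close> by simp_all
    ultimately have "x - v \<in> {t *\<^sub>R (y - v) | t y. t \<ge> 0 \<and> y \<in> polyhedron_of H}"
      by blast
    then show "x \<in> C"
      unfolding C_def by (rule image_eqI[rotated]) simp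
  qed
  ultimately have "closure C = polyhedron_of (active_constraints H v)"
    using closure_minimal[OF _ closed_polyhedron_of] closure_subset by (metis subset_antisym)
  then show ?thesis
    using assms(2) by (simp add: tangent_cone_def C_def)
qed

lemma rational_polyhedron_eq_tangent_cone_near:
  assumes "rational_polyhedron L P"
  shows "\<exists>U. open U \<and> v \<in> U \<and> (\<forall>y\<in>U. y \<in> P \<longleftrightarrow> y \<in> tangent_cone P v)"
proof (cases "v \<in> P")
  case True
  obtain H where H: "finite H" "P = polyhedron_of H"
    using assms by (auto simp: rational_polyhedron_iff)
  obtain U where U: "open U" "v \<in> U" "U \<inter> polyhedron_of (active_constraints H v) \<subseteq> polyhedron_of H"
    using polyhedron_of_locally_active[OF H(1)] True H(2) by blast
  have "tangent_cone P v = polyhedron_of (active_constraints H v)"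
    using tangent_cone_polyhedron_of[OF H(1)] True H(2) by simp
  then have "\<forall>y\<in>U. y \<in> P \<longleftrightarrow> y \<in> tangent_cone P v"
    using U(3) polyhedron_of_subset_active[of H v] H(2) by blast
  then show ?thesis
    using U(1,2) by blast
next
  case False
  have "open (- P)"
    using assms by (auto simp: rational_polyhedron_iff closed_polyhedron_of)
  then show ?thesis
    using False by (intro exI[of _ "- P"]) (simp add: tangent_cone_def)
qed

definition rational_cone_at :: "'v::euclidean_space set \<Rightarrow> 'v \<Rightarrow> 'v set \<Rightarrow> bool" where
  "rational_cone_at L v P \<longleftrightarrow>
     (\<exists>T. finite T \<and> rational_constraints L T \<and> tight_at T v \<and> P = polyhedron_of T)"

lemma rational_cone_at_tangent_cone:
  assumes "rational_polyhedron L P" "v \<in> P"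
  shows "rational_cone_at L v (tangent_cone P v)"
proof -
  obtain H where H: "finite H" "rational_constraints L H" "P = polyhedron_of H"
    using assms(1) by (auto simp: rational_polyhedron_iff)
  then show ?thesis
    unfolding rational_cone_at_def using assms(2)
    by (intro exI[of _ "active_constraints H v"])
      (simp add: finite_active_constraints rational_constraints_active tight_at_active_constraints
        tangent_cone_polyhedron_of)
qed

lemma apex_ray:
  assumes "convex K" "cone K" "k\<^sub>0 \<in> K" "- k\<^sub>0 \<in> K" "y \<in> (\<lambda>x. w + x) ` K" "s \<ge> 0"
  shows "(w + k\<^sub>0) + s *\<^sub>R (y - (w + k\<^sub>0)) \<in> (\<lambda>x. w + x) ` K"
proof -
  obtain k where k: "k \<in> K" "y = w + k"
    using assms(5) by blast
  have "(1 - s) *\<^sub>R k\<^sub>0 \<in> K"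
  proof (cases "s \<le> 1")
    case True
    then show ?thesis
      using assms(2,3) unfolding cone_def by simp
  next
    case False
    then have "(s - 1) *\<^sub>R (- k\<^sub>0) \<in> K"
      using assms(2,4) unfolding cone_def by (meson diff_ge_0_iff_ge nle_le)
    moreover have "(s - 1) *\<^sub>R (- k\<^sub>0) = (1 - s) *\<^sub>R k\<^sub>0"
      by (simp add: algebra_simps)
    ultimately show ?thesis
      by simp
  qed
  moreover have "s *\<^sub>R k \<in> K"
    using assms(2,6) k(1) unfolding cone_def by simp
  ultimately have "s *\<^sub>R k + (1 - s) *\<^sub>R k\<^sub>0 \<in> K"
    using assms(1,2) convex_cone[of K] by blast
  moreover have "(w + k\<^sub>0) + s *\<^sub>R (y - (w + k\<^sub>0)) = w + (s *\<^sub>R k + (1 - s) *\<^sub>R k\<^sub>0)"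
    using k(2) by (simp add: algebra_simps)
  ultimately show ?thesis
    by blast
qed

lemma rational_cone_at_if_cone_with_apex:
  assumes "cone_with_apex L P v"
  shows "rational_cone_at L v P"
proof -
  obtain w K where "rational_polyhedron L P" and K: "cone K" "convex K" "P = (\<lambda>x. w + x) ` K"
    and "v \<in> (\<lambda>x. w + x) ` (K \<inter> uminus ` K)"
    using assms unfolding cone_with_apex_def by blast
  then obtain k\<^sub>0 where k\<^sub>0: "k\<^sub>0 \<in> K" "- k\<^sub>0 \<in> K" "v = w + k\<^sub>0"
    by force
  obtain H where H: "finite H" "rational_constraints L H" "P = polyhedron_of H"
    using \<open>rational_polyhedron L P\<close> unfolding rational_polyhedron_iff by blast
  have "v \<in> P"
    unfolding K(3) k\<^sub>0(3) using k\<^sub>0(1) by (rule imageI)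
  then have "v \<in> polyhedron_of H"
    using H(3) by simp
  have ray: "v + s *\<^sub>R (y - v) \<in> P" if "y \<in> P" "s \<ge> 0" for y s
    using apex_ray[OF K(2,1) k\<^sub>0(1,2), of y w s] that unfolding K(3) k\<^sub>0(3) by blast
  have "polyhedron_of (active_constraints H v) \<subseteq> P"
  proof
    fix x
    assume "x \<in> polyhedron_of (active_constraints H v)"
    then obtain \<epsilon> where "\<epsilon> > 0" "v + \<epsilon> *\<^sub>R (x - v) \<in> P"
      using polyhedron_of_active_shrink[OF H(1) \<open>v \<in> polyhedron_of H\<close>] H(3) by blast
    moreover have "x = v + (1 / \<epsilon>) *\<^sub>R ((v + \<epsilon> *\<^sub>R (x - v)) - v)" "1 / \<epsilon> \<ge> 0"
      using \<open>\<epsilon> > 0\<close> by simp_all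
    ultimately show "x \<in> P"
      by (metis ray)
  qed
  then have "P = polyhedron_of (active_constraints H v)"
    using H(3) polyhedron_of_subset_active by blast
  then show ?thesis
    unfolding rational_cone_at_def using H(1,2)
    by (blast intro: finite_active_constraints rational_constraints_active tight_at_active_constraints)
qed

lemma homogeneous_constraints_cone:
  fixes T :: "('a::euclidean_space \<times> real) set"
  assumes "finite T"
  defines "K \<equiv> {d. \<forall>a c. (a, c) \<in> T \<longrightarrow> 0 \<le> a \<bullet> d}"
  shows "cone K" "convex K" "closed K" "polyhedron K"
proof -
  have K_eq: "K = (\<Inter>h\<in>T. {x. fst h \<bullet> x \<ge> 0})"
    by (force simp: K_def)
  show "cone K"
    unfolding K_def cone_def by simp
  show "convex K"
    unfolding K_eq by (intro convex_INT) (auto intro: convex_halfspace_ge)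
  show "closed K"
    unfolding K_eq by (intro closed_INT) (auto intro: closed_halfspace_ge)
  show "polyhedron K"
    unfolding K_eq using assms(1) by (intro polyhedron_Inter) (auto intro: polyhedron_halfspace_ge)
qed

lemma cone_with_apex_if_rational_cone_at:
  assumes "rational_cone_at L v P"
  shows "cone_with_apex L P v"
proof -
  obtain T where T: "finite T" "rational_constraints L T" "tight_at T v" "P = polyhedron_of T"
    using assms unfolding rational_cone_at_def by blast
  define K where "K = {d. \<forall>a c. (a, c) \<in> T \<longrightarrow> 0 \<le> a \<bullet> d}"
  have P_iff: "x \<in> P \<longleftrightarrow> x - v \<in> K" for x
  proof -
    have "c \<le> a \<bullet> x \<longleftrightarrow> 0 \<le> a \<bullet> (x - v)" if "(a, c) \<in> T" for a c
      using T(3) that by (auto simp: tight_at_def inner_diff_right)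
    then show ?thesis
      unfolding T(4) K_def polyhedron_of_def mem_Collect_eq by blast
  qed
  have "P = (\<lambda>x. v + x) ` K"
  proof (intro set_eqI iffI)
    fix x
    assume "x \<in> P"
    then show "x \<in> (\<lambda>x. v + x) ` K"
      using P_iff by (intro image_eqI[of _ _ "x - v"]) simp_all
  next
    fix x
    assume "x \<in> (\<lambda>x. v + x) ` K"
    then obtain d where "d \<in> K" "x = v + d"
      by blast
    then show "x \<in> P"
      using P_iff[of x] by simp
  qed
  moreover have "cone K" "convex K" "closed K" "polyhedron K"
    using homogeneous_constraints_cone[OF T(1)] by (simp_all add: K_def)
  moreover have "rational_polyhedron L P"
    using T by (auto simp: rational_polyhedron_iff)
  moreover have "v \<in> (\<lambda>x. v + x) ` (K \<inter> uminus ` K)"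
    by (rule image_eqI[of _ _ 0]) (auto simp: K_def)
  ultimately show ?thesis
    unfolding cone_with_apex_def by (intro conjI exI[of _ v] exI[of _ K])
qed

section \<open>Elements of S_v and their vanishing\<close>

lemma Cind_eq: "Cind P \<sigma> k x = (if 0 < k \<and> (1 / of_int k) *\<^sub>R (x - \<sigma>) \<in> P then 1 else 0)"
proof -
  have "(of_int k, x) \<in> Ccone P \<sigma> \<longleftrightarrow> 0 < k \<and> (1 / of_int k) *\<^sub>R (x - \<sigma>) \<in> P"
  proof
    assume "(of_int k, x) \<in> Ccone P \<sigma>"
    then show "0 < k \<and> (1 / of_int k) *\<^sub>R (x - \<sigma>) \<in> P"
      by (auto simp: Ccone_def)
  next
    assume *: "0 < k \<and> (1 / of_int k) *\<^sub>R (x - \<sigma>) \<in> P"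
    then have "x = of_int k *\<^sub>R ((1 / of_int k) *\<^sub>R (x - \<sigma>)) + \<sigma>"
      by simp
    then show "(of_int k, x) \<in> Ccone P \<sigma>"
      unfolding Ccone_def using * by fastforce
  qed
  then show ?thesis
    by (simp add: Cind_def)
qed

lemma Cind_nonpos: "k \<le> 0 \<Longrightarrow> Cind P \<sigma> k x = 0"
  by (simp add: Cind_eq)

lemma Cind_polyhedron_of_ray:
  assumes "tight_at T u" "k > 0" "n \<ge> 0"
  shows "Cind (polyhedron_of T) \<sigma> (k + n) (x + of_int n *\<^sub>R u) = Cind (polyhedron_of T) \<sigma> k x"
proof -
  have scaled: "c \<le> a \<bullet> ((1 / K) *\<^sub>R w) \<longleftrightarrow> c * K \<le> a \<bullet> w" if "K > 0" for a w c and K :: real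
    using that by (simp add: pos_le_divide_eq)
  have iff: "c \<le> a \<bullet> ((1 / of_int (k + n)) *\<^sub>R (x + of_int n *\<^sub>R u - \<sigma>)) \<longleftrightarrow>
      c \<le> a \<bullet> ((1 / of_int k) *\<^sub>R (x - \<sigma>))" if "(a, c) \<in> T" for a c
  proof -
    have eq: "a \<bullet> (x + of_int n *\<^sub>R u - \<sigma>) = a \<bullet> (x - \<sigma>) + of_int n * c"
      using assms(1) that by (simp add: tight_at_def inner_diff_right inner_add_right)
    have "c \<le> a \<bullet> ((1 / of_int (k + n)) *\<^sub>R (x + of_int n *\<^sub>R u - \<sigma>)) \<longleftrightarrow>
        c * of_int (k + n) \<le> a \<bullet> (x + of_int n *\<^sub>R u - \<sigma>)"
      by (rule scaled) (use assms(2,3) in simp)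
    also have "\<dots> \<longleftrightarrow> c * of_int k \<le> a \<bullet> (x - \<sigma>)"
      unfolding eq by (simp add: algebra_simps)
    also have "\<dots> \<longleftrightarrow> c \<le> a \<bullet> ((1 / of_int k) *\<^sub>R (x - \<sigma>))"
      by (rule scaled[symmetric]) (use assms(2) in simp)
    finally show ?thesis .
  qed
  then show ?thesis
    using assms(2,3) unfolding Cind_eq polyhedron_of_def by auto
qed

lemma poly_eq_0_if_eventually_0:
  fixes p :: "'a::{idom, ring_char_0} poly"
  assumes "\<And>j. j \<ge> J \<Longrightarrow> poly p (of_nat j) = 0"
  shows "p = 0"
proof (rule ccontr)
  assume "p \<noteq> 0"
  then have "finite {z. poly p z = 0}"
    by (rule poly_roots_finite)
  moreover have "of_nat ` {J..} \<subseteq> {z. poly p z = 0}"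
    using assms by auto
  ultimately have "finite (of_nat ` {J..} :: 'a set)"
    by (rule finite_subset[rotated])
  then show False
    using finite_imageD[of of_nat "{J..}"] inj_of_nat infinite_Ici by (metis inj_on_subset subset_UNIV)
qed

lemma dist_scaled_ray:
  assumes "K > 0" "s \<ge> 0"
  shows "dist ((1 / (K + s)) *\<^sub>R (x + s *\<^sub>R u)) u = norm (x - K *\<^sub>R u) / (K + s)"
proof -
  have "u = (1 / (K + s)) *\<^sub>R ((K + s) *\<^sub>R u)"
    using assms by simp
  then have "(1 / (K + s)) *\<^sub>R (x + s *\<^sub>R u) - u = (1 / (K + s)) *\<^sub>R (x + s *\<^sub>R u - (K + s) *\<^sub>R u)"
    by (metis scaleR_diff_right)
  also have "x + s *\<^sub>R u - (K + s) *\<^sub>R u = x - K *\<^sub>R u"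
    by (simp add: algebra_simps)
  finally have "(1 / (K + s)) *\<^sub>R (x + s *\<^sub>R u) - u = (1 / (K + s)) *\<^sub>R (x - K *\<^sub>R u)" .
  then show ?thesis
    using assms by (simp add: dist_norm)
qed

lemma is_decomp_finite_iff:
  assumes "finite D"
  shows "is_decomp L D q m \<longleftrightarrow>
    (\<forall>d\<in>D. rational_polyhedron L (fst d) \<and> snd d \<in> rat_lattice L \<and> quasi_poly L (q d)) \<and>
    (\<forall>k. \<forall>x\<in>L. m k x = (\<Sum>d\<in>D. q d k x * Cind (fst d) (snd d) k x))"
proof -
  have "locally_finite_fam D"
    using assms unfolding locally_finite_fam_def by (intro allI exI[of _ UNIV]) simp
  moreover have "(\<Sum>d\<in>{d\<in>D. Cind (fst d) (snd d) k x \<noteq> 0}. q d k x * Cind (fst d) (snd d) k x) =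
      (\<Sum>d\<in>D. q d k x * Cind (fst d) (snd d) k x)" for k x
    using assms by (intro sum.mono_neutral_left) auto
  ultimately show ?thesis
    unfolding is_decomp_def by simp
qed

lemma is_decomp_nonpos:
  assumes "is_decomp L D q m" "x \<in> L" "k \<le> 0"
  shows "m k x = 0"
  using assms by (simp add: is_decomp_def Cind_nonpos)

lemma cone_sum_polynomial_along_ray:
  assumes L: "full_rank_lattice L" and "finite D" "N > 0" "of_nat n *\<^sub>R u \<in> L" "k > 0" "x \<in> L"
    and q: "\<And>d. d \<in> D \<Longrightarrow> polynomial_along_rays L N (q d)"
    and cones: "\<And>d. d \<in> D \<Longrightarrow> tight_at (T d) u \<and> fst d = polyhedron_of (T d)"
  defines "M \<equiv> N * int n"
  shows "\<exists>p. \<forall>j::nat. (\<Sum>d\<in>D. q d (k + int j * M) (x + of_int (int j * M) *\<^sub>R u) *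
      Cind (fst d) (snd d) (k + int j * M) (x + of_int (int j * M) *\<^sub>R u)) = poly p (of_nat j)"
proof -
  have "of_int (int j * M) *\<^sub>R u = (of_nat j * of_int N) *\<^sub>R (of_nat n *\<^sub>R u)" for j
    by (simp add: M_def)
  then have "\<forall>d\<in>D. \<exists>p. \<forall>j::nat. q d (k + int j * M) (x + of_int (int j * M) *\<^sub>R u) = poly p (of_nat j)"
    using q polynomial_along_raysD[OF _ \<open>of_nat n *\<^sub>R u \<in> L\<close> \<open>x \<in> L\<close>]
    by (simp add: M_def mult.assoc) blast
  then obtain p where p: "\<And>d j. d \<in> D \<Longrightarrow>
      q d (k + int j * M) (x + of_int (int j * M) *\<^sub>R u) = poly (p d) (of_nat j)"
    by metis
  have "M \<ge> 0"
    using \<open>N > 0\<close> by (simp add: M_def)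
  then have Cind_ray: "Cind (fst d) (snd d) (k + int j * M) (x + of_int (int j * M) *\<^sub>R u) =
      Cind (fst d) (snd d) k x" if "d \<in> D" for d j
    using Cind_polyhedron_of_ray[of "T d" u k "int j * M"] cones[OF that] \<open>k > 0\<close> by simp
  have "(\<Sum>d\<in>D. q d (k + int j * M) (x + of_int (int j * M) *\<^sub>R u) *
      Cind (fst d) (snd d) (k + int j * M) (x + of_int (int j * M) *\<^sub>R u)) =
      (\<Sum>d\<in>D. poly (p d) (of_nat j) * Cind (fst d) (snd d) k x)" for j
    by (intro sum.cong refl) (simp only: p Cind_ray)
  also have "\<dots> j = poly (\<Sum>d\<in>D. smult (Cind (fst d) (snd d) k x) (p d)) (of_nat j)" for j
    by (simp add: poly_sum mult.commute)
  finally show ?thesis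
    by blast
qed

text \<open>Taking \<open>u\<close> on all the hyperplanes through \<open>v\<close> that bound the cones of a decomposition
  makes the cone indicators constant along these rays.\<close>
lemma in_Sv_polynomial_along_rays:
  assumes L: "full_rank_lattice L" and f: "in_Sv L v f" and "e > 0"
  obtains u M where "dist u v < e" "M > 0" "of_int M *\<^sub>R u \<in> L"
    "\<And>k x. k > 0 \<Longrightarrow> x \<in> L \<Longrightarrow>
       \<exists>p. \<forall>j::nat. f (k + int j * M) (x + of_int (int j * M) *\<^sub>R u) = poly p (of_nat j)"
proof -
  obtain D q where "finite D" and dec: "is_decomp L D q f" and cones: "\<forall>d\<in>D. cone_with_apex L (fst d) v"
    using f unfolding in_Sv_def by blast
  have qp: "\<And>d. d \<in> D \<Longrightarrow> quasi_poly L (q d)"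
    and f_eq: "\<And>k x. x \<in> L \<Longrightarrow> f k x = (\<Sum>d\<in>D. q d k x * Cind (fst d) (snd d) k x)"
    using dec \<open>finite D\<close> by (auto simp: is_decomp_finite_iff)
  have "\<forall>d\<in>D. \<exists>T. finite T \<and> rational_constraints L T \<and> tight_at T v \<and> fst d = polyhedron_of T"
    using cones rational_cone_at_if_cone_with_apex unfolding rational_cone_at_def by blast
  then obtain T where T: "\<And>d. d \<in> D \<Longrightarrow> finite (T d)" "\<And>d. d \<in> D \<Longrightarrow> rational_constraints L (T d)"
    "\<And>d. d \<in> D \<Longrightarrow> tight_at (T d) v" "\<And>d. d \<in> D \<Longrightarrow> fst d = polyhedron_of (T d)"
    by metis
  define F where "F = (\<Union>d\<in>D. T d)"
  have "finite F" "rational_constraints L F" "tight_at F v"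
    using \<open>finite D\<close> T(1-3) by (auto simp: F_def rational_constraints_def tight_at_def)
  then obtain u where u: "u \<in> rat_lattice L" "dist u v < e" "tight_at F u"
    using rat_lattice_dense_in_solutions[OF L] \<open>e > 0\<close> by blast
  then have u_T: "tight_at (T d) u" if "d \<in> D" for d
    using that by (auto simp: F_def tight_at_def)
  obtain n :: nat where "n > 0" "of_nat n *\<^sub>R u \<in> L"
    using u(1) unfolding rat_lattice_def by blast
  obtain N where "N > 0" and N: "\<forall>d\<in>D. polynomial_along_rays L N (q d)"
    using quasi_polys_polynomial_along_rays[OF L \<open>finite D\<close>, of q] qp by blast
  define M where "M = N * int n"
  have "M > 0"
    using \<open>N > 0\<close> \<open>n > 0\<close> by (simp add: M_def)
  have Mu: "of_int M *\<^sub>R u \<in> L"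
    using full_rank_lattice_scaleR_int[OF L \<open>of_nat n *\<^sub>R u \<in> L\<close>, of N] by (simp add: M_def)
  show ?thesis
  proof (rule that[OF u(2) \<open>M > 0\<close> Mu])
    fix k :: int and x
    assume "k > 0" "x \<in> L"
    have "x + of_int (int j * M) *\<^sub>R u \<in> L" for j
      using full_rank_lattice_add[OF L \<open>x \<in> L\<close> full_rank_lattice_scaleR_int[OF L Mu, of "int j"]]
      by simp
    then show "\<exists>p. \<forall>j::nat. f (k + int j * M) (x + of_int (int j * M) *\<^sub>R u) = poly p (of_nat j)"
      using cone_sum_polynomial_along_ray[OF L \<open>finite D\<close> \<open>N > 0\<close> \<open>of_nat n *\<^sub>R u \<in> L\<close> \<open>k > 0\<close> \<open>x \<in> L\<close>,
          of q T] N u_T T(4)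
      by (simp add: f_eq M_def)
  qed
qed

lemma scaled_ray_eventually_near:
  fixes k M N :: int and x u :: "'a::real_normed_vector"
  assumes "k > 0" "M > 0" "r > 0"
  shows "\<exists>J::nat. \<forall>j\<ge>J. k + int j * M > N \<and>
    dist ((1 / of_int (k + int j * M)) *\<^sub>R (x + of_int (int j * M) *\<^sub>R u)) u < r"
proof -
  obtain J :: nat where J: "real J > max (of_int N) (norm (x - of_int k *\<^sub>R u) / r)"
    using reals_Archimedean2 by blast
  have "k + int j * M > N \<and> dist ((1 / of_int (k + int j * M)) *\<^sub>R (x + of_int (int j * M) *\<^sub>R u)) u < r"
    if "j \<ge> J" for j
  proof -
    define K where "K = k + int j * M"
    have "int j \<le> K"
      using assms(1,2) mult_left_mono[of 1 M "int j"] by (simp add: K_def)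
    then have "real_of_int K \<ge> real j"
      by (metis of_int_le_iff of_int_of_nat_eq)
    then have "K > N" "real_of_int K > norm (x - of_int k *\<^sub>R u) / r"
      using J \<open>j \<ge> J\<close> by linarith+
    have "real_of_int K > 0"
      using \<open>real_of_int K \<ge> real j\<close> assms(1,2) by (simp add: K_def add_pos_nonneg)
    have "norm (x - of_int k *\<^sub>R u) < r * of_int K"
      using \<open>real_of_int K > norm (x - of_int k *\<^sub>R u) / r\<close> assms(3) by (simp add: pos_divide_less_eq mult.commute)
    then have "norm (x - of_int k *\<^sub>R u) / of_int K < r"
      using \<open>real_of_int K > 0\<close> by (simp add: pos_divide_less_eq mult.commute)
    moreover have "dist ((1 / of_int K) *\<^sub>R (x + of_int (int j * M) *\<^sub>R u)) u = norm (x - of_int k *\<^sub>R u) / of_int K"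
      using dist_scaled_ray[of "of_int k" "of_int (int j * M)"] assms(1,2) by (simp add: K_def)
    ultimately show ?thesis
      using \<open>K > N\<close> by (simp add: K_def)
  qed
  then show ?thesis
    by blast
qed

lemma in_Sv_eq_0_if_agrees_near_0:
  assumes L: "full_rank_lattice L" and f: "in_Sv L v f" and near: "agrees_near L v (\<lambda>_ _. 0) f"
    and "x \<in> L"
  shows "f k x = 0"
proof (cases "k > 0")
  case False
  then show ?thesis
    using f is_decomp_nonpos \<open>x \<in> L\<close> unfolding in_Sv_def by (metis not_less)
next
  case True
  obtain B N where "open B" "v \<in> B" "N > 0"
    and vanish: "\<And>k x. x \<in> L \<Longrightarrow> k > N \<Longrightarrow> (1 / of_int k) *\<^sub>R x \<in> B \<Longrightarrow> f k x = 0"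
    using near unfolding agrees_near_def by blast
  obtain r where "r > 0" "ball v r \<subseteq> B"
    using \<open>open B\<close> \<open>v \<in> B\<close> open_contains_ball by blast
  obtain u M where u: "dist u v < r / 2" and "M > 0" "of_int M *\<^sub>R u \<in> L"
    and ray: "\<And>k x. k > 0 \<Longrightarrow> x \<in> L \<Longrightarrow>
       \<exists>p. \<forall>j::nat. f (k + int j * M) (x + of_int (int j * M) *\<^sub>R u) = poly p (of_nat j)"
    using in_Sv_polynomial_along_rays[OF L f, of "r / 2"] \<open>r > 0\<close> by auto
  obtain p where p: "\<And>j. f (k + int j * M) (x + of_int (int j * M) *\<^sub>R u) = poly p (of_nat j)"
    using ray[OF True \<open>x \<in> L\<close>] by blast
  have "r / 2 > 0"
    using \<open>r > 0\<close> by simp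
  then obtain J where J: "\<And>j. j \<ge> J \<Longrightarrow> k + int j * M > N \<and>
      dist ((1 / of_int (k + int j * M)) *\<^sub>R (x + of_int (int j * M) *\<^sub>R u)) u < r / 2"
    using scaled_ray_eventually_near[OF True \<open>M > 0\<close>, where N = N and x = x and u = u] by blast
  have "poly p (of_nat j) = 0" if "j \<ge> J" for j
  proof -
    have "(1 / of_int (k + int j * M)) *\<^sub>R (x + of_int (int j * M) *\<^sub>R u) \<in> B"
      using J[OF that] u \<open>ball v r \<subseteq> B\<close> dist_triangle_half_r[of u] by (auto simp: dist_commute)
    moreover have "x + of_int (int j * M) *\<^sub>R u \<in> L"
      using full_rank_lattice_add[OF L \<open>x \<in> L\<close> full_rank_lattice_scaleR_int[OF L \<open>of_int M *\<^sub>R u \<in> L\<close>, of "int j"]]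
      by simp
    ultimately show ?thesis
      using vanish J[OF that] p[of j] by simp
  qed
  then have "p = 0"
    by (rule poly_eq_0_if_eventually_0)
  then show ?thesis
    using p[of 0] by simp
qed

lemma agrees_near_diff:
  assumes "agrees_near L v m f" "agrees_near L v m g"
  shows "agrees_near L v (\<lambda>_ _. 0) (\<lambda>k x. f k x - g k x)"
proof -
  obtain B N B' N' where "open B" "v \<in> B" "N > 0" "open B'" "v \<in> B'" "N' > 0"
    and "\<forall>k. \<forall>x\<in>L. k > N \<and> (1 / of_int k) *\<^sub>R x \<in> B \<longrightarrow> f k x = m k x"
    and "\<forall>k. \<forall>x\<in>L. k > N' \<and> (1 / of_int k) *\<^sub>R x \<in> B' \<longrightarrow> g k x = m k x"
    using assms unfolding agrees_near_def by metis
  then show ?thesis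
    unfolding agrees_near_def
    by (intro exI[of _ "B \<inter> B'"] exI[of _ "max N N'"]) auto
qed

lemma in_Sv_diff:
  assumes "in_Sv L v f" "in_Sv L v g"
  shows "in_Sv L v (\<lambda>k x. f k x - g k x)"
proof -
  obtain D q D' q' where D: "finite D" "is_decomp L D q f" "\<forall>d\<in>D. cone_with_apex L (fst d) v"
    and D': "finite D'" "is_decomp L D' q' g" "\<forall>d\<in>D'. cone_with_apex L (fst d) v"
    using assms unfolding in_Sv_def by metis
  define q'' where "q'' d = (\<lambda>k x. (if d \<in> D then q d k x else 0) - (if d \<in> D' then q' d k x else 0))" for d
  have qp_if: "quasi_poly L (\<lambda>k x. if d \<in> E then h d k x else 0)"
    if "is_decomp L E h m" "finite E" for E h m d
    using that by (cases "d \<in> E") (simp_all add: is_decomp_finite_iff quasi_poly_const)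
  have "quasi_poly L (q'' d)" for d
    unfolding q''_def using qp_if D(1,2) D'(1,2) by (intro quasi_poly_diff)
  moreover have "f k x - g k x = (\<Sum>d\<in>D \<union> D'. q'' d k x * Cind (fst d) (snd d) k x)" if "x \<in> L" for k x
  proof -
    have restrict: "(\<Sum>d\<in>D \<union> D'. (if d \<in> E then h d else 0) * c d) = (\<Sum>d\<in>E. h d * c d)"
      if "E \<subseteq> D \<union> D'" for E and h c :: "_ \<Rightarrow> complex"
      using that D(1) D'(1) by (intro sum.mono_neutral_cong_right) auto
    show ?thesis
      using D(1,2) D'(1,2) that
      by (simp add: q''_def left_diff_distrib sum_subtractf restrict is_decomp_finite_iff)
  qed
  ultimately have "is_decomp L (D \<union> D') q'' (\<lambda>k x. f k x - g k x)"
    using D D' by (auto simp: is_decomp_finite_iff)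
  then show ?thesis
    unfolding in_Sv_def using D D' by blast
qed

section \<open>The tangent cone construction\<close>

lemma seg_sum_memI: "y \<in> P \<Longrightarrow> 0 \<le> s \<Longrightarrow> s \<le> 1 \<Longrightarrow> y + s *\<^sub>R \<sigma> \<in> seg_sum P \<sigma>"
  unfolding seg_sum_def by blast

lemma is_decomp_local_pieces:
  assumes dec: "is_decomp L D q m"
  obtains D' r where "finite D'" "D' \<subseteq> D" "{d\<in>D. v \<in> fst d} \<subseteq> D'" "r > 0"
    "\<And>d y. d \<in> D' \<Longrightarrow> y \<in> ball v r \<Longrightarrow> y \<in> fst d \<longleftrightarrow> y \<in> tangent_cone (fst d) v"
    "\<And>d y. d \<in> D \<Longrightarrow> y \<in> ball v r \<Longrightarrow> y \<in> seg_sum (fst d) (snd d) \<Longrightarrow> d \<in> D'"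
proof -
  obtain U where "open U" "v \<in> U" and fin: "finite {d\<in>D. seg_sum (fst d) (snd d) \<inter> U \<noteq> {}}"
    using dec unfolding is_decomp_def locally_finite_fam_def by blast
  define D' where "D' = {d\<in>D. seg_sum (fst d) (snd d) \<inter> U \<noteq> {}}"
  have "finite D'"
    using fin by (simp add: D'_def)
  have "v \<in> seg_sum (fst d) (snd d)" if "v \<in> fst d" for d
    using seg_sum_memI[OF that, of 0] by simp
  then have D\<^sub>0: "{d\<in>D. v \<in> fst d} \<subseteq> D'"
    using \<open>v \<in> U\<close> by (auto simp: D'_def)
  have "\<forall>d\<in>D'. \<exists>W. open W \<and> v \<in> W \<and> (\<forall>y\<in>W. y \<in> fst d \<longleftrightarrow> y \<in> tangent_cone (fst d) v)"
  proof
    fix d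
    assume "d \<in> D'"
    then have "rational_polyhedron L (fst d)"
      using dec unfolding is_decomp_def D'_def by blast
    then show "\<exists>W. open W \<and> v \<in> W \<and> (\<forall>y\<in>W. y \<in> fst d \<longleftrightarrow> y \<in> tangent_cone (fst d) v)"
      by (rule rational_polyhedron_eq_tangent_cone_near)
  qed
  from bchoice[OF this] obtain W where W: "\<forall>d\<in>D'. open (W d) \<and> v \<in> W d \<and>
      (\<forall>y\<in>W d. y \<in> fst d \<longleftrightarrow> y \<in> tangent_cone (fst d) v)"
    by blast
  have "open (U \<inter> (\<Inter>d\<in>D'. W d))" "v \<in> U \<inter> (\<Inter>d\<in>D'. W d)"
    using \<open>finite D'\<close> W \<open>open U\<close> \<open>v \<in> U\<close> by auto
  then obtain r where "r > 0" and r: "ball v r \<subseteq> U \<inter> (\<Inter>d\<in>D'. W d)"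
    by (rule openE)
  show ?thesis
  proof (rule that[OF \<open>finite D'\<close> _ D\<^sub>0 \<open>r > 0\<close>])
    show "D' \<subseteq> D"
      by (auto simp: D'_def)
    show "y \<in> fst d \<longleftrightarrow> y \<in> tangent_cone (fst d) v" if "d \<in> D'" "y \<in> ball v r" for d y
      using W r that by blast
    show "d \<in> D'" if "d \<in> D" "y \<in> ball v r" "y \<in> seg_sum (fst d) (snd d)" for d y
      using r that by (auto simp: D'_def)
  qed
qed

lemma finite_pieces_at:
  assumes "is_decomp L D q m"
  shows "finite {d\<in>D. v \<in> fst d}"
  by (rule is_decomp_local_pieces[OF assms, of v]) (rule finite_subset)

lemma in_Sv_Tv:
  fixes D :: "('v::euclidean_space set \<times> 'v) set"
  assumes dec: "is_decomp L D q m"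
  shows "in_Sv L v (Tv D q v)"
proof -
  define D\<^sub>0 where "D\<^sub>0 = {d\<in>D. v \<in> fst d}"
  have fin: "finite {d\<in>D. v \<in> fst d}"
    using finite_pieces_at[OF dec] .
  define \<phi> where "\<phi> d = (tangent_cone (fst d) v, snd d)" for d :: "'v set \<times> 'v"
  define q' where "q' d' = (\<lambda>k x. \<Sum>d\<in>{d\<in>D\<^sub>0. \<phi> d = d'}. q d k x)" for d'
  have hyps: "rational_polyhedron L (fst d)" "snd d \<in> rat_lattice L" "quasi_poly L (q d)" "v \<in> fst d"
    if "d \<in> D\<^sub>0" for d
    using dec that by (auto simp: is_decomp_def D\<^sub>0_def)
  have cones: "cone_with_apex L (fst d') v" if d': "d' \<in> \<phi> ` D\<^sub>0" for d'
  proof -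
    obtain d where "d \<in> D\<^sub>0" "d' = \<phi> d"
      using d' by blast
    then show ?thesis
      using hyps(1,4) by (simp add: \<phi>_def cone_with_apex_if_rational_cone_at rational_cone_at_tangent_cone)
  qed
  text \<open>Decompositions are indexed by pairs \<open>(P, \<sigma>)\<close>, so pieces with equal tangent cone and
    shift have to be merged.\<close>
  have "Tv D q v k x = (\<Sum>d'\<in>\<phi> ` D\<^sub>0. q' d' k x * Cind (fst d') (snd d') k x)" for k x
  proof -
    have "Tv D q v k x = (\<Sum>d\<in>D\<^sub>0. q d k x * Cind (fst (\<phi> d)) (snd (\<phi> d)) k x)"
      by (simp add: Tv_def D\<^sub>0_def \<phi>_def)
    also have "\<dots> = (\<Sum>d'\<in>\<phi> ` D\<^sub>0. \<Sum>d\<in>{d\<in>D\<^sub>0. \<phi> d = d'}. q d k x * Cind (fst d') (snd d') k x)"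
      using fin unfolding D\<^sub>0_def by (subst sum.image_gen) (auto intro!: sum.cong)
    also have "\<dots> = (\<Sum>d'\<in>\<phi> ` D\<^sub>0. q' d' k x * Cind (fst d') (snd d') k x)"
      by (simp add: q'_def sum_distrib_right)
    finally show ?thesis .
  qed
  moreover have "rational_polyhedron L (fst d') \<and> snd d' \<in> rat_lattice L \<and> quasi_poly L (q' d')"
    if "d' \<in> \<phi> ` D\<^sub>0" for d'
    using cones[OF that] that hyps(2,3)
    by (auto simp: cone_with_apex_def \<phi>_def q'_def intro!: quasi_poly_sum)
  ultimately have "is_decomp L (\<phi> ` D\<^sub>0) q' (Tv D q v)"
    using fin by (simp add: is_decomp_finite_iff D\<^sub>0_def)
  then show ?thesis
    unfolding in_Sv_def using finite_imageI[OF fin] cones unfolding D\<^sub>0_def by blast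
qed

lemma dist_scaled_shift:
  assumes "k > 0" "norm \<sigma> \<le> S" "2 * S < k * r" "dist ((1 / k) *\<^sub>R x) v < r / 2"
  shows "dist ((1 / k) *\<^sub>R (x - \<sigma>)) v < r"
proof -
  have "norm ((1 / k) *\<^sub>R \<sigma>) < r / 2"
    using assms(1-3) by (simp add: field_simps)
  moreover have eq: "(1 / k) *\<^sub>R (x - \<sigma>) - v = ((1 / k) *\<^sub>R x - v) - (1 / k) *\<^sub>R \<sigma>"
    by (simp add: scaleR_diff_right)
  ultimately show ?thesis
    using assms(4) norm_triangle_ineq4[of "(1 / k) *\<^sub>R x - v" "(1 / k) *\<^sub>R \<sigma>"]
    unfolding dist_norm eq by linarith
qed

text \<open>For large \<open>k\<close> the shifts \<open>\<sigma>/k\<close> of the finitely many relevant pieces are small, so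
  \<open>(\<lambda> - \<sigma>)/k\<close> stays in the ball where each piece agrees with its tangent cone.\<close>
lemma Tv_agrees_near:
  assumes dec: "is_decomp L D q m"
  shows "agrees_near L v m (Tv D q v)"
proof -
  obtain D' r where "finite D'" "D' \<subseteq> D" "{d\<in>D. v \<in> fst d} \<subseteq> D'" "r > 0"
    and tangent: "\<And>d y. d \<in> D' \<Longrightarrow> y \<in> ball v r \<Longrightarrow> y \<in> fst d \<longleftrightarrow> y \<in> tangent_cone (fst d) v"
    and support: "\<And>d y. d \<in> D \<Longrightarrow> y \<in> ball v r \<Longrightarrow> y \<in> seg_sum (fst d) (snd d) \<Longrightarrow> d \<in> D'"
    using is_decomp_local_pieces[OF dec] by blast
  define S where "S = (\<Sum>d\<in>D'. norm (snd d))"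
  have S: "norm (snd d) \<le> S" if "d \<in> D'" for d
    unfolding S_def using \<open>finite D'\<close> that by (intro member_le_sum) auto
  obtain z :: int where "2 * S / r < of_int z"
    using ex_less_of_int by blast
  define N where "N = max 1 z"
  have "N > 0"
    by (simp add: N_def)
  have "Tv D q v k x = m k x" if "x \<in> L" "k > N" and x: "(1 / of_int k) *\<^sub>R x \<in> ball v (r / 2)" for k x
  proof -
    have "k > 0"
      using that(2) \<open>N > 0\<close> by simp
    have "2 * S / r < of_int k"
      using \<open>2 * S / r < of_int z\<close> that(2) by (simp add: N_def)
    then have "2 * S < of_int k * r"
      using \<open>r > 0\<close> by (simp add: pos_divide_less_eq)
    then have near: "(1 / of_int k) *\<^sub>R (x - snd d) \<in> ball v r" if "d \<in> D'" for d
      using dist_scaled_shift[OF _ S[OF that]] \<open>k > 0\<close> x by (simp add: dist_commute)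
    have "d \<in> D'" if "d \<in> D" "Cind (fst d) (snd d) k x \<noteq> 0" for d
    proof -
      have "(1 / of_int k) *\<^sub>R (x - snd d) \<in> fst d"
        using that(2) by (simp add: Cind_eq split: if_splits)
      then have "(1 / of_int k) *\<^sub>R (x - snd d) + (1 / of_int k) *\<^sub>R snd d \<in> seg_sum (fst d) (snd d)"
        using \<open>k > 0\<close> by (intro seg_sum_memI) simp_all
      moreover have "(1 / of_int k) *\<^sub>R x \<in> ball v r"
        using x subset_ball[of "r / 2" r v] \<open>r > 0\<close> by auto
      ultimately show ?thesis
        using support that(1) by (simp add: scaleR_diff_right)
    qed
    then have "m k x = (\<Sum>d\<in>D'. q d k x * Cind (fst d) (snd d) k x)"
      using dec \<open>x \<in> L\<close> \<open>D' \<subseteq> D\<close> unfolding is_decomp_def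
      by (auto intro!: sum.mono_neutral_left \<open>finite D'\<close>)
    also have "\<dots> = (\<Sum>d\<in>D'. q d k x * Cind (tangent_cone (fst d) v) (snd d) k x)"
      using tangent near by (simp add: Cind_eq)
    also have "\<dots> = Tv D q v k x"
      unfolding Tv_def using \<open>{d\<in>D. v \<in> fst d} \<subseteq> D'\<close> \<open>D' \<subseteq> D\<close>
      by (intro sum.mono_neutral_right \<open>finite D'\<close>) (auto simp: tangent_cone_def Cind_eq)
    finally show ?thesis ..
  qed
  then show ?thesis
    unfolding agrees_near_def using \<open>N > 0\<close> \<open>r > 0\<close>
    by (intro exI[of _ "ball v (r / 2)"] exI[of _ N]) auto
qed

lemma in_Sv_agrees_near_unique:
  assumes L: "full_rank_lattice L" and dec: "is_decomp L D q m"
    and "in_Sv L v m'" "agrees_near L v m m'" "x \<in> L"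
  shows "m' k x = Tv D q v k x"
proof -
  have "in_Sv L v (\<lambda>k x. m' k x - Tv D q v k x)"
    using assms(3) in_Sv_Tv[OF dec] by (rule in_Sv_diff)
  moreover have "agrees_near L v (\<lambda>_ _. 0) (\<lambda>k x. m' k x - Tv D q v k x)"
    using assms(4) Tv_agrees_near[OF dec] by (rule agrees_near_diff)
  ultimately have "m' k x - Tv D q v k x = 0"
    using in_Sv_eq_0_if_agrees_near_0[OF L] \<open>x \<in> L\<close> by blast
  then show ?thesis
    by simp
qed

theorem proposition5p5:
  fixes L :: "'v::euclidean_space set" and m :: "int \<Rightarrow> 'v \<Rightarrow> complex" and v :: 'v
    and D :: "('v set \<times> 'v) set" and q :: "'v set \<times> 'v \<Rightarrow> int \<Rightarrow> 'v \<Rightarrow> complex"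
  assumes "full_rank_lattice L"
    and "is_decomp L D q m"
  shows "in_Sv L v (Tv D q v) \<and> agrees_near L v m (Tv D q v) \<and>
         (\<forall>m'. in_Sv L v m' \<and> agrees_near L v m m' \<longrightarrow> (\<forall>k. \<forall>x\<in>L. m' k x = Tv D q v k x)) \<and>
         (\<forall>D' q'. is_decomp L D' q' m \<longrightarrow> (\<forall>k. \<forall>x\<in>L. Tv D' q' v k x = Tv D q v k x))"
proof (intro conjI allI impI ballI)
  show "in_Sv L v (Tv D q v)" "agrees_near L v m (Tv D q v)"
    using assms(2) by (simp_all add: in_Sv_Tv Tv_agrees_near)
next
  fix m' k x
  assume "in_Sv L v m' \<and> agrees_near L v m m'" "x \<in> L"
  then show "m' k x = Tv D q v k x"
    using in_Sv_agrees_near_unique[OF assms] by blast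
next
  fix D' q' k x
  assume "is_decomp L D' q' m" "x \<in> L"
  then show "Tv D' q' v k x = Tv D q v k x"
    using in_Sv_agrees_near_unique[OF assms] in_Sv_Tv Tv_agrees_near by blast
qed

end
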